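(* Let $\mathcal{X}$ be a finite set, $\pi$ a probability mass function on $\mathcal{X}$ with full support, and let a group $\mathcal{G}$ act on $\mathcal{X}$ with Gibbs, Metropolis–Hastings and Barker orbit kernels $G$, $M$, $B$. Let $\mathbf{G}=\{Q\in\mathcal{S}(\pi):GQG=Q\}$. For every $P\in\mathcal{S}(\pi)$ and $Q\in\mathbf{G}$, $D^\pi_{KL}(P\|Q)\ge D^\pi_{KL}(PM\|Q)$, $D^\pi_{KL}(P\|Q)\ge D^\pi_{KL}(PB\|Q)$, $D^\pi_{KL}(P\|Q)\ge D^\pi_{KL}(MP\|Q)$ and $D^\pi_{KL}(P\|Q)\ge D^\pi_{KL}(BP\|Q)$.
   Context: $\mathcal{S}(\pi)$ is the set of transition matrices $P$ with $\pi P=\pi$. $D^\pi_{KL}(P\|Q)=\sum_{x,y}\pi(x)P(x,y)\log\frac{P(x,y)}{Q(x,y)}$ with convention $0\log(0/a)=0$. With $\mathcal{O}(x)$ the orbit of $x$: $G(x,y)=\pi(y)/\pi(\mathcal{O}(x))$ for $y\in\mathcal{O}(x)$, else $0$; $M(x,y)=\frac{1}{|\mathcal{O}(x)|-1}\min\{1,\pi(y)/\pi(x)\}$ for $y\in\mathcal{O}(x)\setminus\{x\}$, $0$ off the orbit, $M(x,x)=1-\sum_{y\ne x}M(x,y)$; $B$ is the same with acceptance $\pi(y)/(\pi(x)+\pi(y))$. *)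

theory Defs
  imports "HOL-Analysis.Analysis" "HOL-Algebra.Group_Action"
begin

definition stochastic :: "('a::finite \<Rightarrow> 'a \<Rightarrow> real) \<Rightarrow> bool" where
  "stochastic P \<longleftrightarrow> (\<forall>x y. 0 \<le> P x y) \<and> (\<forall>x. (\<Sum>y\<in>UNIV. P x y) = 1)"

definition stat_kernels :: "('a::finite \<Rightarrow> real) \<Rightarrow> ('a \<Rightarrow> 'a \<Rightarrow> real) set" where
  "stat_kernels \<pi> = {P. stochastic P \<and> (\<forall>y. (\<Sum>x\<in>UNIV. \<pi> x * P x y) = \<pi> y)}"

definition mat_mult :: "('a::finite \<Rightarrow> 'a \<Rightarrow> real) \<Rightarrow> ('a \<Rightarrow> 'a \<Rightarrow> real) \<Rightarrow> ('a \<Rightarrow> 'a \<Rightarrow> real)"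
  (infixl "\<star>" 70) where
  "(P \<star> Q) x y = (\<Sum>z\<in>UNIV. P x z * Q z y)"

definition KL :: "('a::finite \<Rightarrow> real) \<Rightarrow> ('a \<Rightarrow> 'a \<Rightarrow> real) \<Rightarrow> ('a \<Rightarrow> 'a \<Rightarrow> real) \<Rightarrow> ereal" where
  "KL \<pi> P Q =
     (if \<exists>x y. \<pi> x * P x y > 0 \<and> Q x y = 0 then \<infinity>
      else ereal (\<Sum>x\<in>UNIV. \<Sum>y\<in>UNIV.
              (if \<pi> x * P x y = 0 then 0 else \<pi> x * P x y * ln (P x y / Q x y))))"

definition gibbs_kernel :: "('g, 'b) monoid_scheme \<Rightarrow> ('g \<Rightarrow> 'a::finite \<Rightarrow> 'a) \<Rightarrow> ('a \<Rightarrow> real)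
    \<Rightarrow> 'a \<Rightarrow> 'a \<Rightarrow> real" where
  "gibbs_kernel G \<phi> \<pi> x y =
     (if y \<in> orbit G \<phi> x then \<pi> y / (\<Sum>z\<in>orbit G \<phi> x. \<pi> z) else 0)"

definition orbit_MH_type_kernel :: "(real \<Rightarrow> real \<Rightarrow> real) \<Rightarrow> ('g, 'b) monoid_scheme
    \<Rightarrow> ('g \<Rightarrow> 'a::finite \<Rightarrow> 'a) \<Rightarrow> ('a \<Rightarrow> real) \<Rightarrow> 'a \<Rightarrow> 'a \<Rightarrow> real" where
  "orbit_MH_type_kernel acc G \<phi> \<pi> x y =
     (if y = x then
        1 - (\<Sum>z\<in>orbit G \<phi> x - {x}. acc (\<pi> x) (\<pi> z) / (real (card (orbit G \<phi> x)) - 1))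
      else if y \<in> orbit G \<phi> x then acc (\<pi> x) (\<pi> y) / (real (card (orbit G \<phi> x)) - 1)
      else 0)"

definition metropolis_kernel where
  "metropolis_kernel = orbit_MH_type_kernel (\<lambda>a b. min 1 (b / a))"

definition barker_kernel where
  "barker_kernel = orbit_MH_type_kernel (\<lambda>a b. b / (a + b))"

end

theory Submission
  imports Defs
begin

text \<open>Both divergences are relative entropies of the edge measures \<pi>(x) P(x,y) and \<pi>(x) Q(x,y)
  on pairs of states. Right multiplication by a stochastic matrix K, and left multiplication by a
  \<pi>-reversible one, transform edge measures by a Markov kernel on pairs, so the data processing
  inequality (a consequence of the log-sum inequality) gives KL(PK || QK) \<le> KL(P || Q) and
  KL(KP || KQ) \<le> KL(P || Q). The Metropolis and Barker orbit kernels are \<pi>-reversible and only move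
  within orbits, while GQG = Q forces Q(x,y) to be constant in x and proportional to \<pi>(y) in y
  along orbits; together these give KQ = QK = Q.\<close>

definition rel_entr :: "real \<Rightarrow> real \<Rightarrow> real" where
  "rel_entr a b = (if a = 0 then 0 else a * ln (a / b))"

definition rel_entropy :: "('s::finite \<Rightarrow> real) \<Rightarrow> ('s \<Rightarrow> real) \<Rightarrow> ereal" where
  "rel_entropy p q =
     (if \<exists>s. p s > 0 \<and> q s = 0 then \<infinity> else ereal (\<Sum>s\<in>UNIV. rel_entr (p s) (q s)))"

definition vec_mat_mult :: "('s::finite \<Rightarrow> real) \<Rightarrow> ('s \<Rightarrow> 't \<Rightarrow> real) \<Rightarrow> 't \<Rightarrow> real" where
  "vec_mat_mult p T t = (\<Sum>s\<in>UNIV. p s * T s t)"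

lemma rel_entr_mult_right: "rel_entr (a * c) (b * c) = c * rel_entr a b"
  by (simp add: rel_entr_def)

lemma rel_entr_ge_tangent:
  fixes a b r :: real
  assumes "a \<ge> 0" "b \<ge> 0" "b = 0 \<Longrightarrow> a = 0" "r > 0"
  shows "a * ln r + a - b * r \<le> rel_entr a b"
proof (cases "a = 0")
  case True
  then show ?thesis using assms by (simp add: rel_entr_def)
next
  case False
  with assms have a: "a > 0" and b: "b > 0" by force+
  have "ln r - ln (a / b) \<le> (r - a / b) / (a / b)"
    using a b \<open>r > 0\<close> by (intro ln_diff_le) auto
  also have "(r - a / b) / (a / b) = b * r / a - 1"
    using a b by (simp add: field_simps)
  finally have "a * (ln r - ln (a / b)) \<le> a * (b * r / a - 1)"
    using a by (simp add: mult_left_mono)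
  also have "\<dots> = b * r - a"
    using a by (simp add: field_simps)
  finally show ?thesis
    using False by (simp add: rel_entr_def algebra_simps)
qed

lemma log_sum_inequality:
  fixes a b :: "'i \<Rightarrow> real"
  assumes fin: "finite I"
    and a: "\<And>i. i \<in> I \<Longrightarrow> a i \<ge> 0" and b: "\<And>i. i \<in> I \<Longrightarrow> b i \<ge> 0"
    and ac: "\<And>i. i \<in> I \<Longrightarrow> b i = 0 \<Longrightarrow> a i = 0"
  shows "rel_entr (\<Sum>i\<in>I. a i) (\<Sum>i\<in>I. b i) \<le> (\<Sum>i\<in>I. rel_entr (a i) (b i))"
proof (cases "\<forall>i\<in>I. a i = 0")
  case True
  then show ?thesis by (simp add: rel_entr_def)
next
  case False
  define A where "A = (\<Sum>i\<in>I. a i)"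
  define B where "B = (\<Sum>i\<in>I. b i)"
  from False obtain j where j: "j \<in> I" "a j \<noteq> 0" by blast
  have "a j \<le> A" "b j \<le> B"
    unfolding A_def B_def using fin j a b by (auto intro: member_le_sum)
  moreover have "a j > 0" "b j > 0"
    using a[of j] b[of j] ac[of j] j by force+
  ultimately have A: "A > 0" and B: "B > 0" by linarith+
  \<comment> \<open>sum the tangent bounds at the common ratio A / B\<close>
  have "(\<Sum>i\<in>I. a i * ln (A / B) + a i - b i * (A / B)) \<le> (\<Sum>i\<in>I. rel_entr (a i) (b i))"
    using A B a b ac by (intro sum_mono rel_entr_ge_tangent) auto
  also have "(\<Sum>i\<in>I. a i * ln (A / B) + a i - b i * (A / B)) = A * ln (A / B) + A - B * (A / B)"
    unfolding A_def B_def by (simp add: sum.distrib sum_subtractf sum_distrib_right sum_divide_distrib)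
  also have "\<dots> = A * ln (A / B)"
    using B by simp
  also have "A * ln (A / B) = rel_entr A B"
    using A by (simp add: rel_entr_def)
  finally show ?thesis unfolding A_def B_def .
qed

lemma rel_entropy_vec_mat_mult_le:
  fixes p q :: "'s::finite \<Rightarrow> real"
  assumes p: "\<And>s. p s \<ge> 0" and q: "\<And>s. q s \<ge> 0" and T: "stochastic T"
  shows "rel_entropy (vec_mat_mult p T) (vec_mat_mult q T) \<le> rel_entropy p q"
proof (cases "\<exists>s. p s > 0 \<and> q s = 0")
  case True
  then show ?thesis by (simp add: rel_entropy_def)
next
  case False
  have ac: "p s = 0" if "q s = 0" for s
    using False that p[of s] by force
  from T have T0: "T s t \<ge> 0" and T1: "(\<Sum>t\<in>UNIV. T s t) = 1" for s t
    by (auto simp: stochastic_def)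
  have ac_T: "vec_mat_mult p T t = 0" if "vec_mat_mult q T t = 0" for t
  proof -
    have "q s * T s t = 0" for s
      using that q T0 by (simp add: vec_mat_mult_def sum_nonneg_eq_0_iff)
    then have "p s * T s t = 0" for s
      using ac by auto
    then show ?thesis
      unfolding vec_mat_mult_def by (intro sum.neutral) blast
  qed
  have "(\<Sum>t\<in>UNIV. rel_entr (vec_mat_mult p T t) (vec_mat_mult q T t))
      \<le> (\<Sum>t\<in>UNIV. \<Sum>s\<in>UNIV. rel_entr (p s * T s t) (q s * T s t))"
    unfolding vec_mat_mult_def
    using p q T0 ac by (intro sum_mono log_sum_inequality) auto
  also have "\<dots> = (\<Sum>s\<in>UNIV. (\<Sum>t\<in>UNIV. T s t) * rel_entr (p s) (q s))"
    by (subst sum.swap) (simp add: rel_entr_mult_right flip: sum_distrib_right)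
  also have "\<dots> = (\<Sum>s\<in>UNIV. rel_entr (p s) (q s))"
    using T1 by simp
  finally show ?thesis
    using False ac_T by (auto simp: rel_entropy_def)
qed

definition joint :: "('a::finite \<Rightarrow> real) \<Rightarrow> ('a \<Rightarrow> 'a \<Rightarrow> real) \<Rightarrow> 'a \<times> 'a \<Rightarrow> real" where
  "joint \<pi> P = (\<lambda>(x, y). \<pi> x * P x y)"

definition kernel_fst :: "('a \<Rightarrow> 'a \<Rightarrow> real) \<Rightarrow> 'a \<times> 'b \<Rightarrow> 'a \<times> 'b \<Rightarrow> real" where
  "kernel_fst K = (\<lambda>(a, b) (x, y). if y = b then K a x else 0)"

definition kernel_snd :: "('b \<Rightarrow> 'b \<Rightarrow> real) \<Rightarrow> 'a \<times> 'b \<Rightarrow> 'a \<times> 'b \<Rightarrow> real" where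
  "kernel_snd K = (\<lambda>(a, b) (x, y). if x = a then K b y else 0)"

lemma sum_UNIV_prod: "(\<Sum>s\<in>UNIV. f s) = (\<Sum>x\<in>UNIV. \<Sum>y\<in>UNIV. f (x, y))"
  by (simp add: sum.cartesian_product)

lemma stochastic_kernel_fst:
  fixes K :: "'a::finite \<Rightarrow> 'a \<Rightarrow> real"
  assumes "stochastic K"
  shows "stochastic (kernel_fst K :: 'a \<times> 'b::finite \<Rightarrow> _)"
proof -
  have "(\<Sum>t\<in>UNIV. kernel_fst K (a, b) t) = (\<Sum>x\<in>UNIV. K a x)" for a and b :: 'b
    by (simp add: sum_UNIV_prod kernel_fst_def sum.delta)
  with assms show ?thesis
    by (simp add: stochastic_def kernel_fst_def split_paired_All)
qed

lemma stochastic_kernel_snd: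
  fixes K :: "'b::finite \<Rightarrow> 'b \<Rightarrow> real"
  assumes "stochastic K"
  shows "stochastic (kernel_snd K :: 'a::finite \<times> 'b \<Rightarrow> _)"
proof -
  have "(\<Sum>t\<in>UNIV. kernel_snd K (a, b) t) = (\<Sum>y\<in>UNIV. K b y)" for a :: 'a and b
    by (subst sum_UNIV_prod, subst sum.swap) (simp add: kernel_snd_def)
  with assms show ?thesis
    by (simp add: stochastic_def kernel_snd_def split_paired_All)
qed

lemma KL_eq_rel_entropy_joint:
  fixes \<pi> :: "'a::finite \<Rightarrow> real"
  shows "KL \<pi> P Q = rel_entropy (joint \<pi> P) (joint \<pi> Q)"
proof -
  have "(\<exists>x y. \<pi> x * P x y > 0 \<and> Q x y = 0) \<longleftrightarrow> (\<exists>s. joint \<pi> P s > 0 \<and> joint \<pi> Q s = 0)"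
    by (auto simp: joint_def)
  moreover have "(if \<pi> x * P x y = 0 then 0 else \<pi> x * P x y * ln (P x y / Q x y))
      = rel_entr (joint \<pi> P (x, y)) (joint \<pi> Q (x, y))" for x y
    using rel_entr_mult_right[of "P x y" "\<pi> x" "Q x y"]
    by (simp add: joint_def rel_entr_def mult.commute)
  ultimately show ?thesis
    unfolding KL_def rel_entropy_def sum_UNIV_prod by simp
qed

lemma joint_mat_mult_right: "joint \<pi> (R \<star> K) = vec_mat_mult (joint \<pi> R) (kernel_snd K)"
proof (rule ext, clarify)
  fix x y
  have "vec_mat_mult (joint \<pi> R) (kernel_snd K) (x, y) = (\<Sum>b\<in>UNIV. \<pi> x * R x b * K b y)"
    unfolding vec_mat_mult_def
    by (subst sum_UNIV_prod, subst sum.swap) (simp add: joint_def kernel_snd_def if_distrib cong: if_cong)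
  then show "joint \<pi> (R \<star> K) (x, y) = vec_mat_mult (joint \<pi> R) (kernel_snd K) (x, y)"
    by (simp add: joint_def mat_mult_def sum_distrib_left mult.assoc)
qed

lemma joint_mat_mult_left:
  assumes rev: "\<And>x y. \<pi> x * K x y = \<pi> y * K y x"
  shows "joint \<pi> (K \<star> R) = vec_mat_mult (joint \<pi> R) (kernel_fst K)"
proof (rule ext, clarify)
  fix x y
  have "vec_mat_mult (joint \<pi> R) (kernel_fst K) (x, y) = (\<Sum>a\<in>UNIV. \<pi> a * K a x * R a y)"
    by (simp add: vec_mat_mult_def sum_UNIV_prod
        joint_def kernel_fst_def if_distrib mult_ac cong: if_cong)
  also have "\<dots> = (\<Sum>a\<in>UNIV. \<pi> x * K x a * R a y)"
    by (simp only: rev)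
  finally show "joint \<pi> (K \<star> R) (x, y) = vec_mat_mult (joint \<pi> R) (kernel_fst K) (x, y)"
    by (simp add: joint_def mat_mult_def sum_distrib_left mult.assoc)
qed

lemma KL_mat_mult_right_le:
  fixes \<pi> :: "'a::finite \<Rightarrow> real"
  assumes "\<And>x. \<pi> x \<ge> 0" "\<And>x y. P x y \<ge> 0" "\<And>x y. Q x y \<ge> 0" "stochastic K"
  shows "KL \<pi> (P \<star> K) (Q \<star> K) \<le> KL \<pi> P Q"
  unfolding KL_eq_rel_entropy_joint joint_mat_mult_right
  by (rule rel_entropy_vec_mat_mult_le) (auto simp: joint_def assms stochastic_kernel_snd)

lemma KL_mat_mult_left_le:
  fixes \<pi> :: "'a::finite \<Rightarrow> real"
  assumes "\<And>x. \<pi> x \<ge> 0" "\<And>x y. P x y \<ge> 0" "\<And>x y. Q x y \<ge> 0" "stochastic K"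
    and "\<And>x y. \<pi> x * K x y = \<pi> y * K y x"
  shows "KL \<pi> (K \<star> P) (K \<star> Q) \<le> KL \<pi> P Q"
  unfolding KL_eq_rel_entropy_joint joint_mat_mult_left[OF assms(5)]
  by (rule rel_entropy_vec_mat_mult_le) (auto simp: joint_def assms stochastic_kernel_fst)

definition balanced_acceptance :: "(real \<Rightarrow> real \<Rightarrow> real) \<Rightarrow> bool" where
  "balanced_acceptance acc \<longleftrightarrow>
     (\<forall>u v. 0 < u \<longrightarrow> 0 < v \<longrightarrow> 0 \<le> acc u v \<and> acc u v \<le> 1 \<and> u * acc u v = v * acc v u)"

definition reversible_orbit_kernel ::
    "('g, 'b) monoid_scheme \<Rightarrow> ('g \<Rightarrow> 'a::finite \<Rightarrow> 'a) \<Rightarrow> ('a \<Rightarrow> real) \<Rightarrow> ('a \<Rightarrow> 'a \<Rightarrow> real) \<Rightarrow> bool"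
  where
  "reversible_orbit_kernel G \<phi> \<pi> K \<longleftrightarrow>
     stochastic K \<and> (\<forall>x y. K x y \<noteq> 0 \<longrightarrow> y \<in> orbit G \<phi> x) \<and> (\<forall>x y. \<pi> x * K x y = \<pi> y * K y x)"

lemma balanced_acceptance_metropolis: "balanced_acceptance (\<lambda>a b. min 1 (b / a))"
  by (auto simp: balanced_acceptance_def min_def field_simps)

lemma balanced_acceptance_barker: "balanced_acceptance (\<lambda>a b. b / (a + b))"
  by (auto simp: balanced_acceptance_def field_simps)

lemma mem_orbit_iff_orbit_eq:
  assumes act: "group_action G UNIV \<phi>"
  shows "y \<in> orbit G \<phi> x \<longleftrightarrow> orbit G \<phi> y = orbit G \<phi> x"
proof
  assume y: "y \<in> orbit G \<phi> x"
  then have x: "x \<in> orbit G \<phi> y"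
    by (simp add: group_action.orbit_sym[OF act])
  show "orbit G \<phi> y = orbit G \<phi> x"
    using group_action.orbit_trans[OF act _ _ _ y] group_action.orbit_trans[OF act _ _ _ x] by blast
next
  assume "orbit G \<phi> y = orbit G \<phi> x"
  then show "y \<in> orbit G \<phi> x"
    using group_action.orbit_refl[OF act, of y] by simp
qed

lemma stochastic_orbit_MH_type_kernel:
  fixes \<pi> :: "'a::finite \<Rightarrow> real"
  assumes act: "group_action G UNIV \<phi>" and pos: "\<And>x. \<pi> x > 0"
    and acc: "balanced_acceptance acc"
  shows "stochastic (orbit_MH_type_kernel acc G \<phi> \<pi>)"
proof -
  have "orbit_MH_type_kernel acc G \<phi> \<pi> x y \<ge> 0 \<and> (\<Sum>y\<in>UNIV. orbit_MH_type_kernel acc G \<phi> \<pi> x y) = 1"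
    for x y
  proof -
    define orb where "orb = orbit G \<phi> x"
    define a where "a z = acc (\<pi> x) (\<pi> z) / (real (card orb) - 1)" for z
    have K: "orbit_MH_type_kernel acc G \<phi> \<pi> x =
        (\<lambda>y. if y = x then 1 - (\<Sum>z\<in>orb - {x}. a z) else if y \<in> orb then a y else 0)"
      by (simp add: fun_eq_iff orbit_MH_type_kernel_def orb_def a_def)
    have "x \<in> orb"
      unfolding orb_def using group_action.orbit_refl[OF act] by blast
    then have "card orb \<ge> 1"
      by (auto simp: Suc_le_eq card_gt_0_iff)
    with \<open>x \<in> orb\<close> have card_orb: "card orb \<ge> 1" "real (card (orb - {x})) = real (card orb) - 1"
      by (auto simp: of_nat_diff)
    have acc_x: "0 \<le> acc (\<pi> x) (\<pi> z) \<and> acc (\<pi> x) (\<pi> z) \<le> 1" for z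
      using acc pos by (simp add: balanced_acceptance_def)
    then have a0: "a z \<ge> 0" for z
      using card_orb by (simp add: a_def)
    have "(\<Sum>z\<in>orb - {x}. a z) \<le> (\<Sum>z\<in>orb - {x}. 1 / (real (card orb) - 1))"
      unfolding a_def using acc_x card_orb by (intro sum_mono divide_right_mono) auto
    also have "\<dots> \<le> 1"
      using card_orb by simp
    finally have "(\<Sum>z\<in>orb - {x}. a z) \<le> 1" .
    moreover have "(\<Sum>y\<in>UNIV - {x}. if y \<in> orb then a y else 0) = (\<Sum>z\<in>orb - {x}. a z)"
      by (simp add: sum.inter_restrict[symmetric] Diff_eq Int_commute)
    ultimately show ?thesis
      using a0 by (simp add: K sum.remove[of UNIV x])
  qed
  then show ?thesis
    by (simp add: stochastic_def)
qed

lemma reversible_orbit_kernel_orbit_MH_type_kernel: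
  fixes \<pi> :: "'a::finite \<Rightarrow> real"
  assumes act: "group_action G UNIV \<phi>" and pos: "\<And>x. \<pi> x > 0"
    and acc: "balanced_acceptance acc"
  shows "reversible_orbit_kernel G \<phi> \<pi> (orbit_MH_type_kernel acc G \<phi> \<pi>)"
proof -
  let ?K = "orbit_MH_type_kernel acc G \<phi> \<pi>"
  have "y \<in> orbit G \<phi> x" if "?K x y \<noteq> 0" for x y
    using that group_action.orbit_refl[OF act]
    by (auto simp: orbit_MH_type_kernel_def split: if_splits)
  moreover have "\<pi> x * ?K x y = \<pi> y * ?K y x" for x y
  proof (cases "y \<noteq> x \<and> y \<in> orbit G \<phi> x")
    case True
    then have "orbit G \<phi> y = orbit G \<phi> x"
      by (simp add: mem_orbit_iff_orbit_eq[OF act])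
    moreover have "\<pi> x * acc (\<pi> x) (\<pi> y) = \<pi> y * acc (\<pi> y) (\<pi> x)"
      using acc pos by (simp add: balanced_acceptance_def)
    ultimately show ?thesis
      using True by (auto simp: orbit_MH_type_kernel_def mem_orbit_iff_orbit_eq[OF act])
  next
    case False
    then have "x \<notin> orbit G \<phi> y \<or> y = x"
      by (auto simp: mem_orbit_iff_orbit_eq[OF act])
    then show ?thesis
      using False by (auto simp: orbit_MH_type_kernel_def)
  qed
  ultimately show ?thesis
    using stochastic_orbit_MH_type_kernel[OF assms] by (simp add: reversible_orbit_kernel_def)
qed

lemma gibbs_kernel_col_ratio:
  assumes act: "group_action G UNIV \<phi>" and z: "z \<in> orbit G \<phi> y"
  shows "gibbs_kernel G \<phi> \<pi> w z * \<pi> y = gibbs_kernel G \<phi> \<pi> w y * \<pi> z"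
proof -
  have "z \<in> orbit G \<phi> w \<longleftrightarrow> y \<in> orbit G \<phi> w"
    using z by (simp add: mem_orbit_iff_orbit_eq[OF act])
  then show ?thesis
    by (simp add: gibbs_kernel_def)
qed

lemma gibbs_invariant_row_eq:
  assumes act: "group_action G UNIV \<phi>"
    and GQG: "gibbs_kernel G \<phi> \<pi> \<star> Q \<star> gibbs_kernel G \<phi> \<pi> = Q"
    and z: "z \<in> orbit G \<phi> x"
  shows "Q z y = Q x y"
proof -
  have "gibbs_kernel G \<phi> \<pi> z = gibbs_kernel G \<phi> \<pi> x"
    using z by (simp add: mem_orbit_iff_orbit_eq[OF act] gibbs_kernel_def fun_eq_iff)
  then have "(gibbs_kernel G \<phi> \<pi> \<star> Q \<star> gibbs_kernel G \<phi> \<pi>) z y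
      = (gibbs_kernel G \<phi> \<pi> \<star> Q \<star> gibbs_kernel G \<phi> \<pi>) x y"
    by (simp add: mat_mult_def)
  then show ?thesis
    by (simp only: GQG)
qed

lemma gibbs_invariant_col_ratio:
  assumes act: "group_action G UNIV \<phi>"
    and GQG: "gibbs_kernel G \<phi> \<pi> \<star> Q \<star> gibbs_kernel G \<phi> \<pi> = Q"
    and z: "z \<in> orbit G \<phi> y"
  shows "Q x z * \<pi> y = Q x y * \<pi> z"
proof -
  let ?g = "gibbs_kernel G \<phi> \<pi>"
  have "(?g \<star> Q \<star> ?g) x z * \<pi> y = (\<Sum>w\<in>UNIV. (?g \<star> Q) x w * (?g w z * \<pi> y))"
    by (simp add: mat_mult_def[of "?g \<star> Q"] sum_distrib_right mult.assoc)
  also have "\<dots> = (\<Sum>w\<in>UNIV. (?g \<star> Q) x w * (?g w y * \<pi> z))"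
    by (simp only: gibbs_kernel_col_ratio[OF act z])
  also have "\<dots> = (?g \<star> Q \<star> ?g) x y * \<pi> z"
    by (simp add: mat_mult_def[of "?g \<star> Q"] sum_distrib_right mult.assoc)
  finally show ?thesis
    by (simp only: GQG)
qed

lemma reversible_orbit_kernel_mat_mult_gibbs_invariant:
  assumes act: "group_action G UNIV \<phi>"
    and K: "reversible_orbit_kernel G \<phi> \<pi> K"
    and GQG: "gibbs_kernel G \<phi> \<pi> \<star> Q \<star> gibbs_kernel G \<phi> \<pi> = Q"
  shows "K \<star> Q = Q"
proof (rule ext, rule ext)
  fix x y
  have row: "K x z * Q z y = K x z * Q x y" for z
    using K gibbs_invariant_row_eq[OF act GQG, of z x y]
    by (cases "K x z = 0") (auto simp: reversible_orbit_kernel_def)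
  have "(K \<star> Q) x y = (\<Sum>z\<in>UNIV. K x z) * Q x y"
    by (simp only: mat_mult_def row sum_distrib_right)
  then show "(K \<star> Q) x y = Q x y"
    using K by (simp add: reversible_orbit_kernel_def stochastic_def)
qed

lemma gibbs_invariant_mat_mult_reversible_orbit_kernel:
  assumes act: "group_action G UNIV \<phi>" and pos: "\<And>x. \<pi> x > 0"
    and K: "reversible_orbit_kernel G \<phi> \<pi> K"
    and GQG: "gibbs_kernel G \<phi> \<pi> \<star> Q \<star> gibbs_kernel G \<phi> \<pi> = Q"
  shows "Q \<star> K = Q"
proof (rule ext, rule ext)
  fix x y
  from K have rev: "\<pi> z * K z y = \<pi> y * K y z" for z
    by (simp add: reversible_orbit_kernel_def)
  have col: "Q x z * K z y = Q x y * K y z" for z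
  proof (cases "K z y = 0")
    case True
    then show ?thesis
      using rev[of z] pos[of y] by simp
  next
    case False
    with K have "z \<in> orbit G \<phi> y"
      by (simp add: reversible_orbit_kernel_def mem_orbit_iff_orbit_eq[OF act])
    then have "\<pi> y * (Q x z * K z y) = Q x y * (\<pi> z * K z y)"
      using gibbs_invariant_col_ratio[OF act GQG, of z y x] by (simp add: algebra_simps)
    also have "\<dots> = \<pi> y * (Q x y * K y z)"
      by (simp add: rev)
    finally show ?thesis
      using pos[of y] by simp
  qed
  have "(Q \<star> K) x y = Q x y * (\<Sum>z\<in>UNIV. K y z)"
    by (simp only: mat_mult_def col sum_distrib_left)
  then show "(Q \<star> K) x y = Q x y"
    using K by (simp add: reversible_orbit_kernel_def stochastic_def)
qed

lemma KL_reversible_orbit_kernel_le: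
  fixes \<pi> :: "'a::finite \<Rightarrow> real"
  assumes pos: "\<And>x. \<pi> x > 0" and act: "group_action G UNIV \<phi>"
    and P: "\<And>x y. P x y \<ge> 0" and Q: "\<And>x y. Q x y \<ge> 0"
    and GQG: "gibbs_kernel G \<phi> \<pi> \<star> Q \<star> gibbs_kernel G \<phi> \<pi> = Q"
    and K: "reversible_orbit_kernel G \<phi> \<pi> K"
  shows "KL \<pi> (P \<star> K) Q \<le> KL \<pi> P Q" and "KL \<pi> (K \<star> P) Q \<le> KL \<pi> P Q"
proof -
  have \<pi>_nonneg: "\<pi> x \<ge> 0" for x
    using pos[of x] by simp
  from K have "stochastic K" and rev: "\<And>x y. \<pi> x * K x y = \<pi> y * K y x"
    by (simp_all add: reversible_orbit_kernel_def)
  show "KL \<pi> (P \<star> K) Q \<le> KL \<pi> P Q"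
    using KL_mat_mult_right_le[of \<pi> P Q, OF \<pi>_nonneg P Q \<open>stochastic K\<close>]
    by (simp add: gibbs_invariant_mat_mult_reversible_orbit_kernel[OF act pos K GQG])
  show "KL \<pi> (K \<star> P) Q \<le> KL \<pi> P Q"
    using KL_mat_mult_left_le[of \<pi> P Q, OF \<pi>_nonneg P Q \<open>stochastic K\<close> rev]
    by (simp add: reversible_orbit_kernel_mat_mult_gibbs_invariant[OF act K GQG])
qed

theorem proposition5p4:
  fixes \<pi> :: "'a::finite \<Rightarrow> real"
    and G :: "('g, 'b) monoid_scheme"
    and \<phi> :: "'g \<Rightarrow> 'a \<Rightarrow> 'a"
  assumes pos: "\<And>x. \<pi> x > 0"
    and sum1: "(\<Sum>x\<in>UNIV. \<pi> x) = 1"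
    and act: "group_action G UNIV \<phi>"
    and P: "P \<in> stat_kernels \<pi>"
    and Q: "Q \<in> stat_kernels \<pi>"
    and GQG: "gibbs_kernel G \<phi> \<pi> \<star> Q \<star> gibbs_kernel G \<phi> \<pi> = Q"
  shows "KL \<pi> P Q \<ge> KL \<pi> (P \<star> metropolis_kernel G \<phi> \<pi>) Q \<and>
         KL \<pi> P Q \<ge> KL \<pi> (P \<star> barker_kernel G \<phi> \<pi>) Q \<and>
         KL \<pi> P Q \<ge> KL \<pi> (metropolis_kernel G \<phi> \<pi> \<star> P) Q \<and>
         KL \<pi> P Q \<ge> KL \<pi> (barker_kernel G \<phi> \<pi> \<star> P) Q"
proof -
  \<comment> \<open>of the hypotheses on \<pi>, P and Q only positivity of \<pi> and nonnegativity of P, Q are used\<close>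
  have P0: "\<And>x y. P x y \<ge> 0" and Q0: "\<And>x y. Q x y \<ge> 0"
    using P Q by (simp_all add: stat_kernels_def stochastic_def)
  have "KL \<pi> (P \<star> orbit_MH_type_kernel acc G \<phi> \<pi>) Q \<le> KL \<pi> P Q \<and>
        KL \<pi> (orbit_MH_type_kernel acc G \<phi> \<pi> \<star> P) Q \<le> KL \<pi> P Q"
    if "balanced_acceptance acc" for acc
    using KL_reversible_orbit_kernel_le[where P = P and Q = Q, OF pos act P0 Q0 GQG]
      reversible_orbit_kernel_orbit_MH_type_kernel[where \<pi> = \<pi>, OF act pos that]
    by blast
  from this[OF balanced_acceptance_metropolis] this[OF balanced_acceptance_barker] show ?thesis
    unfolding metropolis_kernel_def barker_kernel_def by simp
qed

end
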